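(* Let $\mathcal{D}$ be any distribution over a domain $X$ and $c$ any concept, and let $\mathcal{D}_c$ be the distribution of $(\mathbf{x}, c(\mathbf{x}))$ where $\mathbf{x} \sim \mathcal{D}$. Suppose a sample $\mathbf{S}'_{\mathrm{big}}$ of $nk$ labeled points is generated by an $\eta$-rate nasty adversary with clean distribution $\mathcal{D}_c$: a clean sample $\mathbf{S}_{\mathrm{big}} \sim (\mathcal{D}_c)^{nk}$ is drawn, the adversary chooses a set $\mathbf{Z} \subseteq [nk]$ of indices (possibly depending on the clean sample) whose size $|\mathbf{Z}|$ has marginal distribution $\mathrm{Bin}(nk,\eta)$, and replaces the examples at indices in $\mathbf{Z}$ by arbitrary labeled examples. The sample $\mathbf{S}'_{\mathrm{big}}$ is then split into $k$ groups $(\mathbf{S}^{(1)})', \ldots, (\mathbf{S}^{(k)})'$ by drawing a uniform random permutation $\boldsymbol{\sigma}:[nk]\to[nk]$, forming $\boldsymbol{\sigma}(\mathbf{S}'_{\mathrm{big}})$ with $i$-th element $(\mathbf{S}'_{\mathrm{big}})_{\boldsymbol{\sigma}(i)}$, and letting $(\mathbf{S}^{(1)})'$ be its first $n$ elements, $(\mathbf{S}^{(2)})'$ the next $n$ elements, and so on. Then there exist random variables $\mathbf{S}^{(1)}, \ldots, \mathbf{S}^{(k)}$ and $\mathbf{z}_1, \ldots, \mathbf{z}_k$ (jointly defined with this process) with the following properties: 1. The marginal distribution of $\mathbf{S}^{(1)}, \ldots, \mathbf{S}^{(k)}$ is that of $k$ independent draws from $(\mathcal{D}_c)^n$. 2.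 The marginal distribution of $\mathbf{z}_1, \ldots, \mathbf{z}_k$ is that of $k$ independent draws from $\mathrm{Bin}(n, \eta)$. 3. With probability $1$, for all $i \in [k]$, the number of coordinates on which $\mathbf{S}^{(i)}$ and $(\mathbf{S}^{(i)})'$ differ is at most $\mathbf{z}_i$.
   Context: This concerns the success-probability amplification procedure for learners under nasty noise, which randomly permutes a corrupted size-$nk$ sample and splits it into $k$ groups of size $n$, running a base learner on each group. In the $\eta$-rate nasty noise model, a clean labeled sample is drawn i.i.d., then the adversary (seeing the whole clean sample) chooses a subset of indices to corrupt whose size is marginally $\mathrm{Bin}(\text{sample size},\eta)$, and replaces those examples arbitrarily. No assumption is made about the correlation between the $\mathbf{S}^{(i)}$ and the $\mathbf{z}_i$. *)

theory Defs
  imports "HOL-Probability.Probability"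
begin

definition labeled_space :: "'a measure \<Rightarrow> ('a \<times> bool) measure" where
  "labeled_space D = D \<Otimes>\<^sub>M (count_space UNIV :: bool measure)"

definition labeled_dist :: "'a measure \<Rightarrow> ('a \<Rightarrow> bool) \<Rightarrow> ('a \<times> bool) measure" where
  "labeled_dist D c = distr D (labeled_space D) (\<lambda>x. (x, c x))"

definition sample_space :: "'a measure \<Rightarrow> nat \<Rightarrow> (nat \<Rightarrow> 'a \<times> bool) measure" where
  "sample_space D m = PiM {..<m} (\<lambda>_. labeled_space D)"

end

theory Submission
  imports Defs "HOL-Combinatorics.Permutations"
begin

text \<open>
  Take the i-th clean group to be the i-th block of n consecutive entries of the clean sample
  permuted by \<sigma>, and z_i to be the number of indices in block i that \<sigma> maps into Z,
  i.e. the size of the i-th block of the random set \<sigma>^-1(Z). A group can only disagree with its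
  corrupted counterpart at such an index, which gives the coupling.

  Since \<sigma> is independent of the clean sample, conditioning on \<sigma> = p merely reindexes an i.i.d.
  sample, so the blocks are again i.i.d. Since \<sigma> is uniform and independent of Z, the set
  \<sigma>^-1(Z) is uniform among the subsets of its size; as |Z| ~ Bin(nk, \<eta>), it equals a given T
  with probability \<eta>^|T| (1 - \<eta>)^(nk - |T|). So \<sigma>^-1(Z) is an \<eta>-biased random subset of the
  indices, and its intersections with the k blocks have independent Bin(n, \<eta>) sizes.
\<close>

section \<open>Permutations and preimages\<close>

lemma permutes_exists_image_eq:
  assumes "finite A" "T \<subseteq> A" "T' \<subseteq> A" "card T' = card T"
  shows "\<exists>r. r permutes A \<and> r ` T' = T"
proof -
  have "finite T" "finite T'"
    using assms finite_subset by auto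
  then obtain f where f: "bij_betw f T' T"
    using finite_same_card_bij[of T' T] assms(4) by auto
  have "card (A - T') = card (A - T)"
    using assms \<open>finite T\<close> \<open>finite T'\<close> by (simp add: card_Diff_subset)
  then obtain g where g: "bij_betw g (A - T') (A - T)"
    using finite_same_card_bij[of "A - T'" "A - T"] assms(1) by auto
  define r where "r x = (if x \<in> T' then f x else if x \<in> A then g x else x)" for x
  have rT': "bij_betw r T' T"
    using f by (rule bij_betw_cong[THEN iffD1, rotated]) (simp add: r_def)
  moreover have "bij_betw r (A - T') (A - T)"
    using g by (rule bij_betw_cong[THEN iffD1, rotated]) (simp add: r_def)
  ultimately have "bij_betw r (T' \<union> (A - T')) (T \<union> (A - T))"
    by (intro bij_betw_combine) auto
  then have "bij_betw r A A"
    using assms by (simp add: Un_Diff_cancel Un_absorb1)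
  moreover have "r x = x" if "x \<notin> A" for x
    using that assms(3) by (auto simp: r_def)
  ultimately have "r permutes A"
    by (rule bij_imp_permutes)
  with rT' show ?thesis
    by (auto simp: bij_betw_def)
qed

lemma permutes_vimage_subset: "p permutes A \<Longrightarrow> z \<subseteq> A \<Longrightarrow> p -` z \<subseteq> A"
  using permutes_not_in by fastforce

lemma card_permutes_vimage: "p permutes A \<Longrightarrow> card (p -` z) = card z"
  by (intro card_vimage_inj) (auto simp: permutes_inj permutes_surj)

lemma card_permutes_vimage_le:
  assumes A: "finite A" and T: "T \<subseteq> A" "T' \<subseteq> A" "card T' = card T"
  shows "card {p. p permutes A \<and> p -` z = T} \<le> card {p. p permutes A \<and> p -` z = T'}"
proof -
  obtain r where r: "r permutes A" "r ` T' = T"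
    using permutes_exists_image_eq[OF A T] by blast
  have "(p \<circ> r) -` z = T'" if "p -` z = T" for p
    using that r by (metis vimage_comp inj_vimage_image_eq permutes_inj)
  then have "(\<lambda>p. p \<circ> r) ` {p. p permutes A \<and> p -` z = T} \<subseteq> {p. p permutes A \<and> p -` z = T'}"
    using r(1) by (auto intro: permutes_compose)
  moreover have "inj (\<lambda>p. p \<circ> r)"
    using permutes_inv_o(1)[OF r(1)] by (intro injI) (metis comp_assoc comp_id)
  moreover have "finite {p. p permutes A \<and> p -` z = T'}"
    using finite_permutations[OF A] by (rule rev_finite_subset) auto
  ultimately show ?thesis
    by (intro card_inj_on_le[OF inj_on_subset]) auto
qed

lemma card_permutes_vimage_eq:
  assumes A: "finite A" and z: "z \<subseteq> A" and T: "T \<subseteq> A"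
  shows "card {p. p permutes A \<and> p -` z = T}
           = (if card T = card z then fact (card z) * fact (card A - card z) else 0)"
proof -
  define Ts where "Ts = {T. T \<subseteq> A \<and> card T = card z}"
  define cnt where "cnt T = card {p. p permutes A \<and> p -` z = T}" for T
  have cnt_eq: "cnt T = cnt z" if "T \<in> Ts" for T
  proof -
    have T': "T \<subseteq> A" "card T = card z"
      using that by (auto simp: Ts_def)
    show ?thesis
      unfolding cnt_def using T'
      by (intro order_antisym card_permutes_vimage_le[OF A T'(1) z] card_permutes_vimage_le[OF A z T'(1)]) simp_all
  qed
  have "card {p. p permutes A} = (\<Sum>T\<in>Ts. cnt T)"
  proof -
    have "{p. p permutes A} = (\<Union>T\<in>Ts. {p. p permutes A \<and> p -` z = T})"
      using z by (auto simp: Ts_def permutes_vimage_subset card_permutes_vimage)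
    moreover have "finite Ts"
      using A by (auto simp: Ts_def finite_subset)
    moreover have "finite {p. p permutes A \<and> p -` z = T}" for T
      using finite_permutations[OF A] by (rule rev_finite_subset) auto
    ultimately show ?thesis
      unfolding cnt_def by (simp only:) (intro card_UN_disjoint, auto)
  qed
  then have "card Ts * cnt z = fact (card A)"
    using card_permutations[OF refl A] by (simp add: sum.cong[OF refl cnt_eq])
  moreover have "card Ts = card A choose card z"
    unfolding Ts_def using n_subsets[OF A] .
  moreover have "card z \<le> card A"
    using A z by (rule card_mono)
  ultimately have "(card A choose card z) * cnt z = (card A choose card z) * (fact (card z) * fact (card A - card z))"
    using binomial_fact_lemma[of "card z" "card A"] by (simp only: ac_simps)
  then have cnt_z: "cnt z = fact (card z) * fact (card A - card z)"
    using zero_less_binomial[OF \<open>card z \<le> card A\<close>] by simp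
  show ?thesis
  proof (cases "card T = card z")
    case True
    with T cnt_z cnt_eq show ?thesis
      by (auto simp: Ts_def cnt_def)
  next
    case False
    then have "{p. p permutes A \<and> p -` z = T} = {}"
      by (auto simp: card_permutes_vimage)
    with False show ?thesis
      by (simp only: card.empty if_False)
  qed
qed

section \<open>Sums over subsets and binomial weights\<close>

lemma block_index_less:
  fixes i j n k :: nat
  assumes "i < k" "j < n"
  shows "i * n + j < n * k"
proof -
  have "i * n + j < Suc i * n"
    using assms(2) by simp
  also have "\<dots> \<le> k * n"
    using assms(1) by (intro mult_le_mono1) simp
  finally show ?thesis
    by (simp add: mult.commute)
qed

lemma sum_Pow_Un_disjoint:
  assumes "finite X" "finite Y" "X \<inter> Y = {}"
  shows "(\<Sum>T\<in>Pow (X \<union> Y). f T) = (\<Sum>T1\<in>Pow X. \<Sum>T2\<in>Pow Y. f (T1 \<union> T2))"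
proof -
  have "bij_betw (\<lambda>(T1, T2). T1 \<union> T2) (Pow X \<times> Pow Y) (Pow (X \<union> Y))"
    using assms(3) by (intro bij_betwI[where g = "\<lambda>T. (T \<inter> X, T \<inter> Y)"]) auto
  then have "(\<Sum>T\<in>Pow (X \<union> Y). f T) = (\<Sum>(T1, T2)\<in>Pow X \<times> Pow Y. f (T1 \<union> T2))"
    by (simp add: sum.reindex_bij_betw[symmetric] case_prod_unfold)
  also have "\<dots> = (\<Sum>T1\<in>Pow X. \<Sum>T2\<in>Pow Y. f (T1 \<union> T2))"
    by (rule sum.cartesian_product[symmetric])
  finally show ?thesis .
qed

lemma sum_Pow_card:
  assumes "finite Y"
  shows "(\<Sum>T\<in>Pow Y. g (card T)) = (\<Sum>m\<le>card Y. of_nat (card Y choose m) * g m)"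
proof -
  have "card ` Pow Y \<subseteq> {..card Y}"
    using assms by (auto intro: card_mono)
  then have "(\<Sum>T\<in>Pow Y. g (card T)) = (\<Sum>m\<le>card Y. \<Sum>T\<in>{T\<in>Pow Y. card T = m}. g (card T))"
    using sum.group[of "Pow Y" "{..card Y}" card "\<lambda>T. g (card T)"] assms by simp
  also have "\<dots> = (\<Sum>m\<le>card Y. of_nat (card {T. T \<subseteq> Y \<and> card T = m}) * g m)"
    by (intro sum.cong) auto
  finally show ?thesis
    by (simp add: n_subsets[OF assms])
qed

lemma measure_binomial_pmf:
  assumes "0 \<le> p" "p \<le> 1"
  shows "measure (measure_pmf (binomial_pmf n p)) A
           = (\<Sum>m\<le>n. if m \<in> A then real (n choose m) * p ^ m * (1 - p) ^ (n - m) else 0)"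
proof -
  have "measure (measure_pmf (binomial_pmf n p)) A = measure (measure_pmf (binomial_pmf n p)) (A \<inter> {..n})"
    using assms by (intro measure_pmf.finite_measure_eq_AE) (auto simp: AE_measure_pmf_iff set_pmf_binomial_eq)
  also have "\<dots> = (\<Sum>m\<in>{..n} \<inter> A. pmf (binomial_pmf n p) m)"
    by (simp add: measure_measure_pmf_finite Int_commute)
  also have "\<dots> = (\<Sum>m\<le>n. if m \<in> A then real (n choose m) * p ^ m * (1 - p) ^ (n - m) else 0)"
    using assms by (simp add: sum.inter_restrict)
  finally show ?thesis .
qed

lemma block_counts_Un_last_block:
  fixes n k :: nat
  assumes T1: "T1 \<subseteq> {..<n * k}" and T2: "T2 \<subseteq> {n * k..<n * k + n}"
  shows "i < k \<Longrightarrow> {j. j < n \<and> i * n + j \<in> T1 \<union> T2} = {j. j < n \<and> i * n + j \<in> T1}"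
    and "card {j. j < n \<and> k * n + j \<in> T1 \<union> T2} = card T2"
proof -
  assume "i < k"
  then have "i * n + j < n * k" if "j < n" for j
    using block_index_less that by blast
  then show "{j. j < n \<and> i * n + j \<in> T1 \<union> T2} = {j. j < n \<and> i * n + j \<in> T1}"
    using T2 by (auto simp: subset_iff) (metis not_less)
next
  have "{j. j < n \<and> k * n + j \<in> T1 \<union> T2} = (\<lambda>t. t - k * n) ` T2"
    using T1 T2 by (force simp: mult.commute image_iff)
  moreover have "inj_on (\<lambda>t. t - k * n) T2"
    using T2 by (auto simp: inj_on_def mult.commute subset_iff) (metis le_add_diff_inverse)
  ultimately show "card {j. j < n \<and> k * n + j \<in> T1 \<union> T2} = card T2"
    by (simp add: card_image)
qed

lemma sum_Pow_block_counts:
  assumes "0 \<le> \<eta>" "\<eta> \<le> 1"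
  shows "(\<Sum>T\<in>Pow {..<n * k}. if \<forall>i<k. card {j. j < n \<and> i * n + j \<in> T} \<in> A i
            then \<eta> ^ card T * (1 - \<eta>) ^ (n * k - card T) else 0)
         = (\<Prod>i<k. measure (measure_pmf (binomial_pmf n \<eta>)) (A i))"
proof (induction k)
  case 0
  then show ?case by simp
next
  case (Suc k)
  define X where "X = {..<n * k}"
  define Y where "Y = {n * k..<n * k + n}"
  have XY: "{..<n * Suc k} = X \<union> Y" "X \<inter> Y = {}" "finite X" "finite Y"
    by (auto simp: X_def Y_def)
  define f where "f T = (if \<forall>i<k. card {j. j < n \<and> i * n + j \<in> T} \<in> A i
            then \<eta> ^ card T * (1 - \<eta>) ^ (n * k - card T) else 0)" for T
  define g where "g m = (if m \<in> A k then \<eta> ^ m * (1 - \<eta>) ^ (n - m) else 0)" for m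
  have split: "(if \<forall>i<Suc k. card {j. j < n \<and> i * n + j \<in> T1 \<union> T2} \<in> A i
            then \<eta> ^ card (T1 \<union> T2) * (1 - \<eta>) ^ (n * Suc k - card (T1 \<union> T2)) else 0)
        = f T1 * g (card T2)" if T1: "T1 \<subseteq> X" and T2: "T2 \<subseteq> Y" for T1 T2
  proof -
    have "finite T1" "finite T2"
      using T1 T2 XY finite_subset by auto
    have "card T1 \<le> n * k" "card T2 \<le> n"
      using card_mono[OF XY(3) T1] card_mono[OF XY(4) T2] by (simp_all add: X_def Y_def)
    then have "n * Suc k - card (T1 \<union> T2) = (n * k - card T1) + (n - card T2)"
      using \<open>finite T1\<close> \<open>finite T2\<close> T1 T2 XY(2) by (subst card_Un_disjoint) auto
    moreover have "card (T1 \<union> T2) = card T1 + card T2"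
      using \<open>finite T1\<close> \<open>finite T2\<close> T1 T2 XY(2) by (subst card_Un_disjoint) auto
    moreover have "(\<forall>i<Suc k. card {j. j < n \<and> i * n + j \<in> T1 \<union> T2} \<in> A i)
        \<longleftrightarrow> (\<forall>i<k. card {j. j < n \<and> i * n + j \<in> T1} \<in> A i) \<and> card T2 \<in> A k"
      using block_counts_Un_last_block[OF T1[unfolded X_def] T2[unfolded Y_def]] by (auto simp: less_Suc_eq)
    ultimately show ?thesis
      unfolding f_def g_def by (auto simp: power_add mult_ac)
  qed
  have "(\<Sum>T\<in>Pow {..<n * Suc k}. if \<forall>i<Suc k. card {j. j < n \<and> i * n + j \<in> T} \<in> A i
            then \<eta> ^ card T * (1 - \<eta>) ^ (n * Suc k - card T) else 0)
      = (\<Sum>T1\<in>Pow X. \<Sum>T2\<in>Pow Y. f T1 * g (card T2))"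
    unfolding XY(1) sum_Pow_Un_disjoint[OF XY(3,4,2)] using split by (intro sum.cong) auto
  also have "\<dots> = (\<Sum>T1\<in>Pow X. f T1) * (\<Sum>T2\<in>Pow Y. g (card T2))"
    by (simp add: sum_product)
  also have "(\<Sum>T1\<in>Pow X. f T1) = (\<Prod>i<k. measure (measure_pmf (binomial_pmf n \<eta>)) (A i))"
    using Suc.IH unfolding f_def X_def .
  also have "(\<Sum>T2\<in>Pow Y. g (card T2)) = measure (measure_pmf (binomial_pmf n \<eta>)) (A k)"
    using sum_Pow_card[OF XY(4), of g] measure_binomial_pmf[OF assms, of n "A k"]
    by (simp add: Y_def g_def if_distrib mult.assoc cong: if_cong)
  finally show ?case
    by (simp add: mult.commute)
qed

section \<open>Mixing over an independent uniform permutation\<close>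

lemma distr_pair_compose_fst:
  assumes P: "prob_space P" and X: "X \<in> P \<rightarrow>\<^sub>M M" and Y: "Y \<in> P \<rightarrow>\<^sub>M N" and f: "f \<in> M \<rightarrow>\<^sub>M K"
    and indep: "distr P (M \<Otimes>\<^sub>M N) (\<lambda>\<omega>. (X \<omega>, Y \<omega>)) = distr P M X \<Otimes>\<^sub>M distr P N Y"
  shows "distr P (K \<Otimes>\<^sub>M N) (\<lambda>\<omega>. (f (X \<omega>), Y \<omega>)) = distr P K (\<lambda>\<omega>. f (X \<omega>)) \<Otimes>\<^sub>M distr P N Y"
proof -
  have f_id: "(\<lambda>(x, y). (f x, y)) \<in> M \<Otimes>\<^sub>M N \<rightarrow>\<^sub>M K \<Otimes>\<^sub>M N"
    using f by measurable
  have f_distr: "f \<in> distr P M X \<rightarrow>\<^sub>M K"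
    using f by (simp add: measurable_cong_sets[OF sets_distr refl])
  have Y_id: "distr (distr P N Y) N (\<lambda>y. y) = distr P N Y"
    by (rule distr_id2) simp
  then have Y_sigma_finite: "sigma_finite_measure (distr (distr P N Y) N (\<lambda>y. y))"
    using prob_space.prob_space_distr[OF P Y] by (simp add: prob_space_imp_sigma_finite)
  have "distr P (K \<Otimes>\<^sub>M N) (\<lambda>\<omega>. (f (X \<omega>), Y \<omega>))
      = distr (distr P (M \<Otimes>\<^sub>M N) (\<lambda>\<omega>. (X \<omega>, Y \<omega>))) (K \<Otimes>\<^sub>M N) (\<lambda>(x, y). (f x, y))"
    using X Y by (subst distr_distr[OF f_id]) (auto simp: comp_def)
  also have "\<dots> = distr (distr P M X) K f \<Otimes>\<^sub>M distr (distr P N Y) N (\<lambda>y. y)"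
    unfolding indep
    by (rule pair_measure_distr[of f "distr P M X" K "\<lambda>y. y" "distr P N Y" N, symmetric])
      (use f_distr Y_sigma_finite in auto)
  also have "\<dots> = distr P K (\<lambda>\<omega>. f (X \<omega>)) \<Otimes>\<^sub>M distr P N Y"
    using X f by (simp add: distr_distr comp_def Y_id)
  finally show ?thesis .
qed

lemma measure_indep_uniform_mixture:
  assumes P: "prob_space P" and X: "X \<in> P \<rightarrow>\<^sub>M M" and \<sigma>: "\<sigma> \<in> P \<rightarrow>\<^sub>M count_space UNIV"
    and indep: "distr P (M \<Otimes>\<^sub>M count_space UNIV) (\<lambda>\<omega>. (X \<omega>, \<sigma> \<omega>))
                  = distr P M X \<Otimes>\<^sub>M measure_pmf (pmf_of_set Ps)"
    and Ps: "finite Ps" "Ps \<noteq> {}" and B: "\<And>p. p \<in> Ps \<Longrightarrow> B p \<in> sets M"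
  shows "measure P {\<omega>\<in>space P. \<sigma> \<omega> \<in> Ps \<and> X \<omega> \<in> B (\<sigma> \<omega>)}
           = (\<Sum>p\<in>Ps. measure (distr P M X) (B p)) / card Ps"
proof -
  interpret prob_space P by (rule P)
  let ?X\<sigma> = "\<lambda>\<omega>. (X \<omega>, \<sigma> \<omega>)"
  have X\<sigma>: "?X\<sigma> \<in> P \<rightarrow>\<^sub>M M \<Otimes>\<^sub>M count_space UNIV"
    using X \<sigma> by (rule measurable_Pair)
  have B\<sigma>: "B p \<times> {p} \<in> sets (M \<Otimes>\<^sub>M count_space UNIV)" if "p \<in> Ps" for p
    using B[OF that] by (intro pair_measureI) auto
  have "{\<omega>\<in>space P. \<sigma> \<omega> \<in> Ps \<and> X \<omega> \<in> B (\<sigma> \<omega>)} = (\<Union>p\<in>Ps. ?X\<sigma> -` (B p \<times> {p}) \<inter> space P)"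
    by auto
  then have "measure P {\<omega>\<in>space P. \<sigma> \<omega> \<in> Ps \<and> X \<omega> \<in> B (\<sigma> \<omega>)}
      = (\<Sum>p\<in>Ps. measure P (?X\<sigma> -` (B p \<times> {p}) \<inter> space P))"
    using Ps measurable_sets[OF X\<sigma> B\<sigma>]
    by (simp only:) (intro measure_finite_Union, auto simp: disjoint_family_on_def)
  also have "\<dots> = (\<Sum>p\<in>Ps. measure (distr P M X) (B p) / card Ps)"
  proof (intro sum.cong refl)
    fix p assume p: "p \<in> Ps"
    have "measure P (?X\<sigma> -` (B p \<times> {p}) \<inter> space P)
        = measure (distr P M X \<Otimes>\<^sub>M measure_pmf (pmf_of_set Ps)) (B p \<times> {p})"
      by (simp add: measure_distr[OF X\<sigma> B\<sigma>[OF p], symmetric] indep)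
    also have "\<dots> = measure (distr P M X) (B p) * measure (measure_pmf (pmf_of_set Ps)) {p}"
      using B[OF p] unfolding measure_def
      by (subst measure_pmf.emeasure_pair_measure_Times) (auto simp: enn2real_mult)
    also have "\<dots> = measure (distr P M X) (B p) / card Ps"
      using p Ps by (simp add: measure_pmf_single)
    finally show "measure P (?X\<sigma> -` (B p \<times> {p}) \<inter> space P) = measure (distr P M X) (B p) / card Ps" .
  qed
  also have "\<dots> = (\<Sum>p\<in>Ps. measure (distr P M X) (B p)) / card Ps"
    by (simp add: sum_divide_distrib)
  finally show ?thesis .
qed

lemma AE_indep_uniform:
  assumes P: "prob_space P" and X: "X \<in> P \<rightarrow>\<^sub>M M" and \<sigma>: "\<sigma> \<in> P \<rightarrow>\<^sub>M count_space UNIV"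
    and indep: "distr P (M \<Otimes>\<^sub>M count_space UNIV) (\<lambda>\<omega>. (X \<omega>, \<sigma> \<omega>))
                  = distr P M X \<Otimes>\<^sub>M measure_pmf (pmf_of_set Ps)"
    and Ps: "finite Ps" "Ps \<noteq> {}"
  shows "AE \<omega> in P. \<sigma> \<omega> \<in> Ps"
proof -
  interpret prob_space P by (rule P)
  have "{\<omega>\<in>space P. \<sigma> \<omega> \<in> Ps \<and> X \<omega> \<in> space M} = \<sigma> -` Ps \<inter> space P"
    using measurable_space[OF X] by auto
  moreover have "measure (distr P M X) (space M) = 1"
    using prob_space.prob_space[OF prob_space_distr[OF X]] by simp
  ultimately have "prob (\<sigma> -` Ps \<inter> space P) = 1"
    using measure_indep_uniform_mixture[OF P X \<sigma> indep Ps, of "\<lambda>_. space M"] Ps by simp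
  then show ?thesis
    by (auto dest: AE_prob_1)
qed

lemma distr_indep_uniform_mixture:
  assumes P: "prob_space P" and X: "X \<in> P \<rightarrow>\<^sub>M M" and \<sigma>: "\<sigma> \<in> P \<rightarrow>\<^sub>M count_space UNIV"
    and indep: "distr P (M \<Otimes>\<^sub>M count_space UNIV) (\<lambda>\<omega>. (X \<omega>, \<sigma> \<omega>))
                  = distr P M X \<Otimes>\<^sub>M measure_pmf (pmf_of_set Ps)"
    and Ps: "finite Ps" "Ps \<noteq> {}"
    and Y: "Y \<in> P \<rightarrow>\<^sub>M N" and G: "\<And>p. p \<in> Ps \<Longrightarrow> G p \<in> M \<rightarrow>\<^sub>M N"
    and Y_eq: "\<And>\<omega>. \<omega> \<in> space P \<Longrightarrow> \<sigma> \<omega> \<in> Ps \<Longrightarrow> Y \<omega> = G (\<sigma> \<omega>) (X \<omega>)"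
    and G_distr: "\<And>p. p \<in> Ps \<Longrightarrow> distr (distr P M X) N (G p) = Q"
  shows "distr P N Y = Q"
proof -
  interpret prob_space P by (rule P)
  obtain p0 where p0: "p0 \<in> Ps"
    using Ps by blast
  interpret Q: prob_space Q
    using G_distr[OF p0] prob_space_distr[OF X] G[OF p0]
    by (metis prob_space.prob_space_distr measurable_cong_sets sets_distr)
  have sets_Q: "sets Q = sets N"
    using G_distr[OF p0] by auto
  show ?thesis
  proof (rule measure_eqI)
    show "sets (distr P N Y) = sets Q"
      by (simp add: sets_Q)
    fix A assume "A \<in> sets (distr P N Y)"
    then have A: "A \<in> sets N" by simp
    have "prob (Y -` A \<inter> space P) = prob (Y -` A \<inter> space P \<inter> (\<sigma> -` Ps \<inter> space P))"
      using AE_indep_uniform[OF P X \<sigma> indep Ps] measurable_sets[OF Y A] measurable_sets[OF \<sigma>]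
      by (intro finite_measure_eq_AE) auto
    also have "Y -` A \<inter> space P \<inter> (\<sigma> -` Ps \<inter> space P)
        = {\<omega>\<in>space P. \<sigma> \<omega> \<in> Ps \<and> X \<omega> \<in> G (\<sigma> \<omega>) -` A \<inter> space M}"
      using Y_eq measurable_space[OF X] by auto
    also have "prob \<dots> = (\<Sum>p\<in>Ps. measure (distr P M X) (G p -` A \<inter> space M)) / card Ps"
      using measurable_sets[OF G A] by (intro measure_indep_uniform_mixture[OF P X \<sigma> indep Ps])
    also have "\<dots> = (\<Sum>p\<in>Ps. measure Q A) / card Ps"
    proof (intro arg_cong[where f = "\<lambda>x. x / _"] sum.cong refl)
      fix p assume p: "p \<in> Ps"
      have "G p \<in> distr P M X \<rightarrow>\<^sub>M N"
        using G[OF p] by (simp add: measurable_cong_sets[OF sets_distr refl])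
      then show "measure (distr P M X) (G p -` A \<inter> space M) = measure Q A"
        using measure_distr[of "G p" "distr P M X" N A] A G_distr[OF p] by simp
    qed
    also have "\<dots> = measure Q A"
      using Ps by simp
    finally show "emeasure (distr P N Y) A = emeasure Q A"
      using A Y by (simp add: emeasure_distr emeasure_eq_measure Q.emeasure_eq_measure)
  qed
qed

section \<open>Blocks of a product measure\<close>

definition blocks :: "nat \<Rightarrow> nat \<Rightarrow> (nat \<Rightarrow> 'b) \<Rightarrow> nat \<Rightarrow> nat \<Rightarrow> 'b" where
  "blocks n k s = (\<lambda>i\<in>{..<k}. \<lambda>j\<in>{..<n}. s (i * n + j))"

lemma measurable_blocks_comp:
  assumes "p ` {..<n * k} \<subseteq> {..<n * k}"
  shows "(\<lambda>s. blocks n k (s \<circ> p)) \<in> PiM {..<n * k} (\<lambda>_. M) \<rightarrow>\<^sub>M PiM {..<k} (\<lambda>_. PiM {..<n} (\<lambda>_. M))"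
proof -
  have "p (i * n + j) \<in> {..<n * k}" if "i < k" "j < n" for i j
    using assms block_index_less[OF that] by auto
  then show ?thesis
    unfolding blocks_def by (intro measurable_restrict measurable_component_singleton) auto
qed

lemma prob_space_eq_if_space_singleton:
  assumes "prob_space M" "prob_space N" "sets M = sets N" "space M = {x}"
  shows "M = N"
proof (rule measure_eqI[OF assms(3)])
  fix A assume "A \<in> sets M"
  then have "A \<subseteq> {x}"
    using sets.sets_into_space assms(4) by blast
  then have "A = {} \<or> A = {x}"
    by auto
  moreover have "space N = {x}"
    using sets_eq_imp_space_eq[OF assms(3)] assms(4) by simp
  ultimately show "emeasure M A = emeasure N A"
    using prob_space.emeasure_space_1[OF assms(1)] prob_space.emeasure_space_1[OF assms(2)] assms(4)
    by auto
qed

lemma indep_vars_PiM_components: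
  assumes M: "\<And>i. i \<in> I \<Longrightarrow> prob_space (M i)" and I: "I \<noteq> {}"
  shows "prob_space.indep_vars (PiM I M) M (\<lambda>i \<omega>. \<omega> i) I"
proof -
  interpret prob_space "PiM I M"
    using M by (rule prob_space_PiM)
  have "distr (PiM I M) (PiM I M) (\<lambda>\<omega>. \<lambda>i\<in>I. \<omega> i) = PiM I M"
    by (subst distr_cong[of _ "PiM I M" _ "PiM I M" _ "\<lambda>\<omega>. \<omega>"]) (auto simp: space_PiM)
  also have "\<dots> = PiM I (\<lambda>i. distr (PiM I M) (M i) (\<lambda>\<omega>. \<omega> i))"
    using M by (intro PiM_cong refl) (simp add: distr_PiM_component)
  finally show ?thesis
    using I by (subst indep_vars_iff_distr_eq_PiM') auto
qed

lemma indep_vars_PiM_blocks: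
  fixes n k :: nat
  assumes M: "prob_space M" and nk: "n * k \<noteq> 0"
  shows "prob_space.indep_vars (PiM {..<n * k} (\<lambda>_. M)) (\<lambda>_. PiM {..<n} (\<lambda>_. M))
           (\<lambda>i s. \<lambda>j\<in>{..<n}. s (i * n + j)) {..<k}"
proof -
  interpret Q: prob_space "PiM {..<n * k} (\<lambda>_. M)"
    using M by (intro prob_space_PiM)
  define K where "K i = {i * n..<i * n + n}" for i
  have "Q.indep_vars (\<lambda>i. PiM (K i) (\<lambda>_. M)) (\<lambda>i s. restrict s (K i)) {..<k}"
  proof (rule Q.indep_vars_restrict)
    have "0 \<in> {..<n * k}"
      using nk by simp
    then show "Q.indep_vars (\<lambda>_. M) (\<lambda>t s. s t) {..<n * k}"
      using M by (intro indep_vars_PiM_components) blast+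
    show "K i \<subseteq> {..<n * k}" if "i \<in> {..<k}" for i
    proof
      fix t assume "t \<in> K i"
      then have "t = i * n + (t - i * n)" "t - i * n < n"
        by (auto simp: K_def)
      then show "t \<in> {..<n * k}"
        using block_index_less[of i k "t - i * n" n] that by simp
    qed
    have "t div n = i" if "t \<in> K i" for t i
      using that by (intro div_nat_eqI) (auto simp: K_def mult.commute)
    then show "disjoint_family_on K {..<k}"
      unfolding disjoint_family_on_def by blast
  qed
  moreover have "(\<lambda>u. \<lambda>j\<in>{..<n}. u (i * n + j)) \<in> PiM (K i) (\<lambda>_. M) \<rightarrow>\<^sub>M PiM {..<n} (\<lambda>_. M)" for i
    by (intro measurable_restrict measurable_component_singleton) (auto simp: K_def)
  ultimately have "Q.indep_vars (\<lambda>_. PiM {..<n} (\<lambda>_. M)) (\<lambda>i s. \<lambda>j\<in>{..<n}. restrict s (K i) (i * n + j)) {..<k}"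
    by (rule Q.indep_vars_compose2)
  moreover have "(\<lambda>i s. \<lambda>j\<in>{..<n}. restrict s (K i) (i * n + j)) = (\<lambda>i s. \<lambda>j\<in>{..<n}. s (i * n + j))"
    by (auto simp: K_def fun_eq_iff)
  ultimately show ?thesis
    by (rule back_subst)
qed

lemma distr_PiM_blocks:
  assumes M: "prob_space M"
  shows "distr (PiM {..<n * k} (\<lambda>_. M)) (PiM {..<k} (\<lambda>_. PiM {..<n} (\<lambda>_. M))) (blocks n k)
           = PiM {..<k} (\<lambda>_. PiM {..<n} (\<lambda>_. M))"
    (is "distr ?Q ?T _ = _")
proof -
  interpret Q: prob_space ?Q
    using M by (intro prob_space_PiM)
  have blocks_meas: "blocks n k \<in> ?Q \<rightarrow>\<^sub>M ?T"
    using measurable_blocks_comp[of id n k M] by (simp add: comp_def)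
  show ?thesis
  proof (cases "n * k = 0")
    case True
    then have "space ?T = {\<lambda>i\<in>{..<k}. \<lambda>j\<in>{..<n}. undefined}"
      by (auto simp: space_PiM PiE_def extensional_def fun_eq_iff Pi_iff)
    moreover have "prob_space ?T"
      using M by (intro prob_space_PiM) auto
    ultimately show ?thesis
      using Q.prob_space_distr[OF blocks_meas] by (intro prob_space_eq_if_space_singleton) auto
  next
    case False
    have "distr ?Q ?T (blocks n k)
        = PiM {..<k} (\<lambda>i. distr ?Q (PiM {..<n} (\<lambda>_. M)) (\<lambda>s. \<lambda>j\<in>{..<n}. s (i * n + j)))"
      unfolding blocks_def using False block_index_less
      by (subst Q.indep_vars_iff_distr_eq_PiM'[symmetric])
        (auto intro!: indep_vars_PiM_blocks[OF M] measurable_restrict measurable_component_singleton)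
    also have "\<dots> = ?T"
    proof (intro PiM_cong refl)
      fix i assume "i \<in> {..<k}"
      then show "distr ?Q (PiM {..<n} (\<lambda>_. M)) (\<lambda>s. \<lambda>j\<in>{..<n}. s (i * n + j)) = PiM {..<n} (\<lambda>_. M)"
        using distr_PiM_reindex[of "{..<n * k}" "\<lambda>_. M" "\<lambda>j. i * n + j" "{..<n}"] M block_index_less
        by (auto simp: inj_on_def)
    qed
    finally show ?thesis .
  qed
qed

lemma distr_PiM_blocks_permutes:
  assumes M: "prob_space M" and p: "p permutes {..<n * k}"
  shows "distr (PiM {..<n * k} (\<lambda>_. M)) (PiM {..<k} (\<lambda>_. PiM {..<n} (\<lambda>_. M))) (\<lambda>s. blocks n k (s \<circ> p))
           = PiM {..<k} (\<lambda>_. PiM {..<n} (\<lambda>_. M))"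
    (is "distr ?Q ?T _ = _")
proof -
  let ?reindex = "\<lambda>s. \<lambda>t\<in>{..<n * k}. s (p t)"
  have p_into: "p \<in> {..<n * k} \<rightarrow> {..<n * k}"
    using permutes_in_image[OF p] by auto
  have reindex: "distr ?Q ?Q ?reindex = ?Q"
    using distr_PiM_reindex[of "{..<n * k}" "\<lambda>_. M" p "{..<n * k}"] M p_into permutes_inj_on[OF p]
    by simp
  have reindex_meas: "?reindex \<in> ?Q \<rightarrow>\<^sub>M ?Q"
    using p_into by (intro measurable_restrict measurable_component_singleton) auto
  have blocks_meas: "blocks n k \<in> ?Q \<rightarrow>\<^sub>M ?T"
    using measurable_blocks_comp[of id n k M] by (simp add: comp_def)
  have "(\<lambda>s. blocks n k (s \<circ> p)) = blocks n k \<circ> ?reindex"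
    using block_index_less by (auto simp: blocks_def fun_eq_iff)
  then have "distr ?Q ?T (\<lambda>s. blocks n k (s \<circ> p)) = distr ?Q ?T (blocks n k \<circ> ?reindex)"
    by (rule arg_cong[where f = "distr ?Q ?T"])
  also have "\<dots> = distr (distr ?Q ?Q ?reindex) ?T (blocks n k)"
    by (rule distr_distr[symmetric, OF blocks_meas reindex_meas])
  also have "\<dots> = ?T"
    by (simp add: reindex distr_PiM_blocks[OF M])
  finally show ?thesis .
qed

section \<open>Preimages of a random set under a uniform permutation\<close>

lemma measurable_vimage_random_set:
  assumes A: "finite A" and Z: "Z \<in> P \<rightarrow>\<^sub>M count_space (Pow A)" and \<sigma>: "\<sigma> \<in> P \<rightarrow>\<^sub>M count_space UNIV"
  shows "(\<lambda>\<omega>. \<sigma> \<omega> -` Z \<omega>) \<in> P \<rightarrow>\<^sub>M count_space UNIV"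
proof -
  have "(\<lambda>\<omega>. \<sigma> \<omega> -` z) \<in> P \<rightarrow>\<^sub>M count_space UNIV" for z
    using \<sigma> by (rule measurable_compose) simp
  then show ?thesis
    using measurable_compose_countable'[of "Pow A" "\<lambda>z \<omega>. \<sigma> \<omega> -` z" P _ Z] Z A
    by (simp add: countable_finite)
qed

lemma sum_permutes_vimage_eq:
  fixes f :: "'a set \<Rightarrow> real"
  assumes A: "finite A" and T: "T \<subseteq> A"
  shows "(\<Sum>p\<in>{p. p permutes A}. \<Sum>z\<in>Pow A. if p -` z = T then f z else 0)
           = fact (card T) * fact (card A - card T) * (\<Sum>z\<in>Pow A. if card z = card T then f z else 0)"
proof -
  let ?c = "fact (card T) * fact (card A - card T) :: real"
  have inner: "(\<Sum>p\<in>{p. p permutes A}. if p -` z = T then f z else 0)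
      = (if card z = card T then ?c * f z else 0)" if "z \<in> Pow A" for z
  proof -
    have "(\<Sum>p\<in>{p. p permutes A}. if p -` z = T then f z else 0) = card {p. p permutes A \<and> p -` z = T} * f z"
      using finite_permutations[OF A] by (simp add: sum.inter_filter[symmetric])
    then show ?thesis
      using card_permutes_vimage_eq[OF A _ T, of z] that by auto
  qed
  have "(\<Sum>p\<in>{p. p permutes A}. \<Sum>z\<in>Pow A. if p -` z = T then f z else 0)
      = (\<Sum>z\<in>Pow A. \<Sum>p\<in>{p. p permutes A}. if p -` z = T then f z else 0)"
    by (rule sum.swap)
  also have "\<dots> = (\<Sum>z\<in>Pow A. if card z = card T then ?c * f z else 0)"
    by (rule sum.cong[OF refl inner])
  also have "\<dots> = ?c * (\<Sum>z\<in>Pow A. if card z = card T then f z else 0)"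
    by (subst sum_distrib_left) (rule sum.cong, auto)
  finally show ?thesis .
qed

lemma sum_permutes_measure_vimage_eq:
  assumes A: "finite A" and T: "T \<subseteq> A" and \<mu>: "finite_measure \<mu>" "sets \<mu> = Pow (Pow A)"
  shows "(\<Sum>p\<in>{p. p permutes A}. measure \<mu> {z\<in>Pow A. p -` z = T})
           = fact (card T) * fact (card A - card T) * measure \<mu> {z\<in>Pow A. card z = card T}"
proof -
  have sum_singletons: "measure \<mu> S = (\<Sum>z\<in>Pow A. if z \<in> S then measure \<mu> {z} else 0)" if "S \<subseteq> Pow A" for S
  proof -
    have "measure \<mu> S = (\<Sum>z\<in>S. measure \<mu> {z})"
      using that A finite_subset[OF that] \<mu> by (intro finite_measure.finite_measure_eq_sum_singleton) auto
    then show ?thesis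
      using that A by (simp add: sum.inter_restrict[symmetric] Int_absorb1)
  qed
  have "(\<Sum>p\<in>{p. p permutes A}. measure \<mu> {z\<in>Pow A. p -` z = T})
      = (\<Sum>p\<in>{p. p permutes A}. \<Sum>z\<in>Pow A. if p -` z = T then measure \<mu> {z} else 0)"
    by (intro sum.cong refl) (subst sum_singletons, auto)
  also have "\<dots> = fact (card T) * fact (card A - card T) * measure \<mu> {z\<in>Pow A. card z = card T}"
    by (subst sum_permutes_vimage_eq[OF A T], subst (2) sum_singletons) auto
  finally show ?thesis .
qed

lemma measure_distr_card_eq:
  assumes Z: "Z \<in> P \<rightarrow>\<^sub>M count_space (Pow A)"
  shows "measure (distr P (count_space (Pow A)) Z) {z\<in>Pow A. card z = m}
           = measure (distr P (count_space UNIV) (\<lambda>\<omega>. card (Z \<omega>))) {m}"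
proof -
  have card_Z: "(\<lambda>\<omega>. card (Z \<omega>)) \<in> P \<rightarrow>\<^sub>M count_space UNIV"
    using Z by (rule measurable_compose) simp
  have "measure (distr P (count_space (Pow A)) Z) {z\<in>Pow A. card z = m}
      = measure P (Z -` {z\<in>Pow A. card z = m} \<inter> space P)"
    by (rule measure_distr[OF Z]) auto
  also have "\<dots> = measure P ((\<lambda>\<omega>. card (Z \<omega>)) -` {m} \<inter> space P)"
    using measurable_space[OF Z] by (intro arg_cong[where f = "measure P"]) auto
  also have "\<dots> = measure (distr P (count_space UNIV) (\<lambda>\<omega>. card (Z \<omega>))) {m}"
    by (rule measure_distr[OF card_Z, symmetric]) simp
  finally show ?thesis .
qed

lemma prob_vimage_indep_uniform_permutation:
  assumes P: "prob_space P" and A: "finite A" and \<eta>: "0 \<le> \<eta>" "\<eta> \<le> 1"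
    and Z: "Z \<in> P \<rightarrow>\<^sub>M count_space (Pow A)"
    and Z_card: "distr P (count_space UNIV) (\<lambda>\<omega>. card (Z \<omega>)) = measure_pmf (binomial_pmf (card A) \<eta>)"
    and \<sigma>: "\<sigma> \<in> P \<rightarrow>\<^sub>M count_space UNIV"
    and indep: "distr P (count_space (Pow A) \<Otimes>\<^sub>M count_space UNIV) (\<lambda>\<omega>. (Z \<omega>, \<sigma> \<omega>))
                  = distr P (count_space (Pow A)) Z \<Otimes>\<^sub>M measure_pmf (pmf_of_set {p. p permutes A})"
    and T: "T \<subseteq> A"
  shows "measure P {\<omega>\<in>space P. \<sigma> \<omega> -` Z \<omega> = T} = \<eta> ^ card T * (1 - \<eta>) ^ (card A - card T)"
proof -
  interpret prob_space P by (rule P)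
  let ?Ps = "{p. p permutes A}"
  let ?\<mu> = "distr P (count_space (Pow A)) Z"
  define m where "m = card T"
  define N where "N = card A"
  interpret \<mu>: prob_space ?\<mu>
    using Z by (rule prob_space_distr)
  have Ps: "finite ?Ps" "?Ps \<noteq> {}"
    using finite_permutations[OF A] permutes_id[of A] by blast+
  have "{\<omega>\<in>space P. \<sigma> \<omega> \<in> ?Ps \<and> Z \<omega> \<in> {z\<in>Pow A. \<sigma> \<omega> -` z = T}}
      = {\<omega>\<in>space P. \<sigma> \<omega> -` Z \<omega> = T} \<inter> (\<sigma> -` ?Ps \<inter> space P)"
    using measurable_space[OF Z] by auto
  moreover have "{\<omega>\<in>space P. \<sigma> \<omega> -` Z \<omega> = T} \<in> sets P"
    using measurable_vimage_random_set[OF A Z \<sigma>] by measurable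
  ultimately have "measure P {\<omega>\<in>space P. \<sigma> \<omega> -` Z \<omega> = T}
      = measure P {\<omega>\<in>space P. \<sigma> \<omega> \<in> ?Ps \<and> Z \<omega> \<in> {z\<in>Pow A. \<sigma> \<omega> -` z = T}}"
    using AE_indep_uniform[OF P Z \<sigma> indep Ps] measurable_sets[OF \<sigma>, of ?Ps]
    by (intro finite_measure_eq_AE) auto
  also have "\<dots> = (\<Sum>p\<in>?Ps. measure ?\<mu> {z\<in>Pow A. p -` z = T}) / card ?Ps"
    by (rule measure_indep_uniform_mixture[OF P Z \<sigma> indep Ps, of "\<lambda>p. {z\<in>Pow A. p -` z = T}"]) auto
  also have "\<dots> = fact m * fact (N - m) * (real (N choose m) * \<eta> ^ m * (1 - \<eta>) ^ (N - m)) / fact N"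
    using sum_permutes_measure_vimage_eq[OF A T \<mu>.finite_measure_axioms] measure_distr_card_eq[OF Z] \<eta>
      card_permutations[OF refl A]
    by (simp add: Z_card measure_pmf_single m_def N_def)
  also have "\<dots> = \<eta> ^ m * (1 - \<eta>) ^ (N - m)"
  proof -
    have "fact m * fact (N - m) * real (N choose m) = fact N"
      using binomial_fact_lemma[of m N] card_mono[OF A T] unfolding m_def N_def
      by (metis of_nat_fact of_nat_mult)
    then show ?thesis
      by (simp add: mult.assoc[symmetric])
  qed
  finally show ?thesis
    by (simp add: m_def N_def)
qed

section \<open>Block counts of a biased random subset\<close>

lemma AE_vimage_indep_uniform_permutation:
  assumes P: "prob_space P" and A: "finite A" and Z: "Z \<in> P \<rightarrow>\<^sub>M count_space (Pow A)"
    and \<sigma>: "\<sigma> \<in> P \<rightarrow>\<^sub>M count_space UNIV"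
    and indep: "distr P (count_space (Pow A) \<Otimes>\<^sub>M count_space UNIV) (\<lambda>\<omega>. (Z \<omega>, \<sigma> \<omega>))
                  = distr P (count_space (Pow A)) Z \<Otimes>\<^sub>M measure_pmf (pmf_of_set {p. p permutes A})"
  shows "AE \<omega> in P. \<sigma> \<omega> -` Z \<omega> \<subseteq> A"
proof -
  interpret prob_space P by (rule P)
  have "finite {p. p permutes A}" "{p. p permutes A} \<noteq> {}"
    using finite_permutations[OF A] permutes_id[of A] by blast+
  then have "AE \<omega> in P. \<sigma> \<omega> permutes A"
    using AE_indep_uniform[OF P Z \<sigma> indep] by simp
  then show ?thesis
    using AE_space by eventually_elim (use measurable_space[OF Z] in \<open>simp add: permutes_vimage_subset\<close>)
qed

lemma measure_block_counts:
  fixes \<nu> :: "nat set measure"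
  assumes \<nu>: "prob_space \<nu>" "sets \<nu> = UNIV" and \<eta>: "0 \<le> \<eta>" "\<eta> \<le> 1"
    and AE: "AE T in \<nu>. T \<subseteq> {..<n * k}"
    and point: "\<And>T. T \<subseteq> {..<n * k} \<Longrightarrow> measure \<nu> {T} = \<eta> ^ card T * (1 - \<eta>) ^ (n * k - card T)"
  shows "measure \<nu> {T. \<forall>i<k. card {j. j < n \<and> i * n + j \<in> T} \<in> B i}
           = (\<Prod>i<k. measure (measure_pmf (binomial_pmf n \<eta>)) (B i))"
proof -
  interpret prob_space \<nu> by (rule \<nu>(1))
  let ?H = "{T\<in>Pow {..<n * k}. \<forall>i<k. card {j. j < n \<and> i * n + j \<in> T} \<in> B i}"
  have "measure \<nu> {T. \<forall>i<k. card {j. j < n \<and> i * n + j \<in> T} \<in> B i} = measure \<nu> ?H"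
    using AE \<nu>(2) by (intro finite_measure_eq_AE) auto
  also have "\<dots> = (\<Sum>T\<in>?H. measure \<nu> {T})"
    using \<nu>(2) by (intro finite_measure_eq_sum_singleton) auto
  also have "\<dots> = (\<Sum>T\<in>?H. \<eta> ^ card T * (1 - \<eta>) ^ (n * k - card T))"
    using point by (intro sum.cong) auto
  also have "\<dots> = (\<Sum>T\<in>Pow {..<n * k}. if \<forall>i<k. card {j. j < n \<and> i * n + j \<in> T} \<in> B i
                        then \<eta> ^ card T * (1 - \<eta>) ^ (n * k - card T) else 0)"
    by (simp only: sum.inter_filter finite_Pow_iff finite_lessThan)
  also have "\<dots> = (\<Prod>i<k. measure (measure_pmf (binomial_pmf n \<eta>)) (B i))"
    by (rule sum_Pow_block_counts[OF \<eta>])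
  finally show ?thesis .
qed

lemma distr_block_counts_indep_uniform_permutation:
  assumes P: "prob_space P" and \<eta>: "0 \<le> \<eta>" "\<eta> \<le> 1"
    and Z: "Z \<in> P \<rightarrow>\<^sub>M count_space (Pow {..<n * k})"
    and Z_card: "distr P (count_space UNIV) (\<lambda>\<omega>. card (Z \<omega>)) = measure_pmf (binomial_pmf (n * k) \<eta>)"
    and \<sigma>: "\<sigma> \<in> P \<rightarrow>\<^sub>M count_space UNIV"
    and indep: "distr P (count_space (Pow {..<n * k}) \<Otimes>\<^sub>M count_space UNIV) (\<lambda>\<omega>. (Z \<omega>, \<sigma> \<omega>))
                  = distr P (count_space (Pow {..<n * k})) Z
                    \<Otimes>\<^sub>M measure_pmf (pmf_of_set {p. p permutes {..<n * k}})"
  shows "(\<lambda>\<omega>. \<lambda>i\<in>{..<k}. card {j. j < n \<and> \<sigma> \<omega> (i * n + j) \<in> Z \<omega>})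
           \<in> P \<rightarrow>\<^sub>M PiM {..<k} (\<lambda>_. count_space UNIV)"
    and "distr P (PiM {..<k} (\<lambda>_. count_space UNIV))
           (\<lambda>\<omega>. \<lambda>i\<in>{..<k}. card {j. j < n \<and> \<sigma> \<omega> (i * n + j) \<in> Z \<omega>})
         = PiM {..<k} (\<lambda>_. measure_pmf (binomial_pmf n \<eta>))"
proof -
  let ?Y = "\<lambda>\<omega>. \<lambda>i\<in>{..<k}. card {j. j < n \<and> \<sigma> \<omega> (i * n + j) \<in> Z \<omega>}"
  let ?W = "\<lambda>\<omega>. \<sigma> \<omega> -` Z \<omega>"
  let ?\<nu> = "distr P (count_space UNIV) ?W"
  define counts where "counts T = (\<lambda>i\<in>{..<k}. card {j. j < n \<and> i * n + j \<in> T})" for T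
  have W: "?W \<in> P \<rightarrow>\<^sub>M count_space UNIV"
    using measurable_vimage_random_set[OF _ Z \<sigma>] by simp
  interpret \<nu>: prob_space ?\<nu>
    using P W by (rule prob_space.prob_space_distr)
  have Y_eq: "?Y = (\<lambda>\<omega>. counts (?W \<omega>))"
    by (simp add: counts_def)
  have "counts \<in> count_space UNIV \<rightarrow>\<^sub>M PiM {..<k} (\<lambda>_. count_space UNIV)"
    by (simp add: counts_def space_PiM)
  then show Y: "?Y \<in> P \<rightarrow>\<^sub>M PiM {..<k} (\<lambda>_. count_space UNIV)"
    unfolding Y_eq using W by (rule measurable_compose[rotated])
  have measure_counts: "measure ?\<nu> {T. counts T \<in> PiE {..<k} B}
      = (\<Prod>i<k. measure (measure_pmf (binomial_pmf n \<eta>)) (B i))" for B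
  proof -
    have "measure ?\<nu> {T} = \<eta> ^ card T * (1 - \<eta>) ^ (n * k - card T)" if "T \<subseteq> {..<n * k}" for T
      using prob_vimage_indep_uniform_permutation[OF P _ \<eta> Z _ \<sigma> indep that] Z_card W
      by (simp add: measure_distr vimage_def Int_def conj_commute)
    moreover have "AE T in ?\<nu>. T \<subseteq> {..<n * k}"
      using AE_vimage_indep_uniform_permutation[OF P _ Z \<sigma> indep] W by (simp add: AE_distr_iff)
    moreover have "{T. counts T \<in> PiE {..<k} B} = {T. \<forall>i<k. card {j. j < n \<and> i * n + j \<in> T} \<in> B i}"
      by (auto simp: counts_def restrict_PiE_iff)
    ultimately show ?thesis
      using measure_block_counts[OF \<nu>.prob_space_axioms _ \<eta>, of n k B] by simp
  qed
  have "product_sigma_finite (\<lambda>_. measure_pmf (binomial_pmf n \<eta>))"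
    by (simp add: product_sigma_finite_def prob_space_imp_sigma_finite prob_space_measure_pmf)
  then show "distr P (PiM {..<k} (\<lambda>_. count_space UNIV)) ?Y = PiM {..<k} (\<lambda>_. measure_pmf (binomial_pmf n \<eta>))"
  proof (rule product_sigma_finite.PiM_eqI)
    show "sets (distr P (PiM {..<k} (\<lambda>_. count_space UNIV)) ?Y)
        = sets (PiM {..<k} (\<lambda>_. measure_pmf (binomial_pmf n \<eta>)))"
      by simp (intro sets_PiM_cong, auto)
    fix B :: "nat \<Rightarrow> nat set"
    have "PiE {..<k} B \<in> sets (PiM {..<k} (\<lambda>_. count_space UNIV))"
      by (rule sets_PiM_I_finite) auto
    then have "emeasure (distr P (PiM {..<k} (\<lambda>_. count_space UNIV)) ?Y) (PiE {..<k} B)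
        = emeasure ?\<nu> {T. counts T \<in> PiE {..<k} B}"
      using Y W by (simp add: emeasure_distr Y_eq vimage_def Int_def)
    also have "\<dots> = (\<Prod>i<k. emeasure (measure_pmf (binomial_pmf n \<eta>)) (B i))"
      by (simp add: \<nu>.emeasure_eq_measure measure_counts prod_ennreal measure_pmf.emeasure_eq_measure)
    finally show "emeasure (distr P (PiM {..<k} (\<lambda>_. count_space UNIV)) ?Y) (PiE {..<k} B)
        = (\<Prod>i\<in>{..<k}. emeasure (measure_pmf (binomial_pmf n \<eta>)) (B i))" by simp
  qed simp
qed

text \<open>On the null event where \<sigma> is not a permutation it is replaced by \<open>id\<close>, so that
  the blocks are defined and measurable everywhere.\<close>

lemma distr_blocks_indep_uniform_permutation:
  fixes X :: "'w \<Rightarrow> nat \<Rightarrow> 'b" and \<sigma> :: "'w \<Rightarrow> nat \<Rightarrow> nat"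
  assumes P: "prob_space P" and M: "prob_space M" and sets_M: "sets M = sets L"
    and X: "X \<in> P \<rightarrow>\<^sub>M PiM {..<n * k} (\<lambda>_. L)"
    and X_distr: "distr P (PiM {..<n * k} (\<lambda>_. L)) X = PiM {..<n * k} (\<lambda>_. M)"
    and \<sigma>: "\<sigma> \<in> P \<rightarrow>\<^sub>M count_space UNIV"
    and indep: "distr P (PiM {..<n * k} (\<lambda>_. L) \<Otimes>\<^sub>M count_space UNIV) (\<lambda>\<omega>. (X \<omega>, \<sigma> \<omega>))
                  = distr P (PiM {..<n * k} (\<lambda>_. L)) X
                    \<Otimes>\<^sub>M measure_pmf (pmf_of_set {p. p permutes {..<n * k}})"
  shows "(\<lambda>\<omega>. blocks n k (X \<omega> \<circ> (if \<sigma> \<omega> permutes {..<n * k} then \<sigma> \<omega> else id)))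
           \<in> P \<rightarrow>\<^sub>M PiM {..<k} (\<lambda>_. PiM {..<n} (\<lambda>_. L))"
    and "distr P (PiM {..<k} (\<lambda>_. PiM {..<n} (\<lambda>_. L)))
           (\<lambda>\<omega>. blocks n k (X \<omega> \<circ> (if \<sigma> \<omega> permutes {..<n * k} then \<sigma> \<omega> else id)))
         = PiM {..<k} (\<lambda>_. PiM {..<n} (\<lambda>_. M))"
proof -
  let ?Ps = "{p. p permutes {..<n * k}}"
  let ?perm = "\<lambda>\<omega>. if \<sigma> \<omega> permutes {..<n * k} then \<sigma> \<omega> else id"
  let ?T = "PiM {..<k} (\<lambda>_. PiM {..<n} (\<lambda>_. L))"
  have Ps: "finite ?Ps" "?Ps \<noteq> {}"
    using finite_permutations[of "{..<n * k}"] permutes_id[of "{..<n * k}"] by blast+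
  have perm: "?perm \<in> P \<rightarrow>\<^sub>M count_space ?Ps"
    using \<sigma> by (rule measurable_compose[where f = \<sigma>]) (simp add: permutes_id)
  have G: "(\<lambda>s. blocks n k (s \<circ> p)) \<in> PiM {..<n * k} (\<lambda>_. L) \<rightarrow>\<^sub>M ?T" if "p \<in> ?Ps" for p
    using that by (intro measurable_blocks_comp) (simp add: permutes_image)
  show Y: "(\<lambda>\<omega>. blocks n k (X \<omega> \<circ> ?perm \<omega>)) \<in> P \<rightarrow>\<^sub>M ?T"
    using measurable_compose_countable'[of ?Ps "\<lambda>p \<omega>. blocks n k (X \<omega> \<circ> p)" P ?T ?perm]
      measurable_compose[OF X G] perm Ps
    by (simp add: countable_finite)
  have sets_T: "sets ?T = sets (PiM {..<k} (\<lambda>_. PiM {..<n} (\<lambda>_. M)))"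
    using sets_M by (intro sets_PiM_cong) auto
  show "distr P ?T (\<lambda>\<omega>. blocks n k (X \<omega> \<circ> ?perm \<omega>)) = PiM {..<k} (\<lambda>_. PiM {..<n} (\<lambda>_. M))"
  proof (rule distr_indep_uniform_mixture[OF P X \<sigma> indep Ps Y G])
    fix p assume p: "p \<in> ?Ps"
    have "distr (PiM {..<n * k} (\<lambda>_. M)) ?T (\<lambda>s. blocks n k (s \<circ> p))
        = distr (PiM {..<n * k} (\<lambda>_. M)) (PiM {..<k} (\<lambda>_. PiM {..<n} (\<lambda>_. M))) (\<lambda>s. blocks n k (s \<circ> p))"
      using sets_T by (intro distr_cong) auto
    then show "distr (distr P (PiM {..<n * k} (\<lambda>_. L)) X) ?T (\<lambda>s. blocks n k (s \<circ> p))
        = PiM {..<k} (\<lambda>_. PiM {..<n} (\<lambda>_. M))"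
      using distr_PiM_blocks_permutes[OF M] p by (simp add: X_distr)
  qed auto
qed

lemma prob_space_labeled_dist:
  assumes "prob_space D" "c \<in> D \<rightarrow>\<^sub>M count_space UNIV"
  shows "prob_space (labeled_dist D c)"
  unfolding labeled_dist_def labeled_space_def
  using assms by (intro prob_space.prob_space_distr) measurable

lemma sets_labeled_dist: "sets (labeled_dist D c) = sets (labeled_space D)"
  by (simp add: labeled_dist_def)

lemma card_blocks_mismatch_le:
  assumes p: "p permutes {..<n * k}" and i: "i < k" and S': "\<forall>t<n * k. t \<notin> Z \<longrightarrow> S' t = S t"
  shows "card {j. j < n \<and> blocks n k (S \<circ> p) i j \<noteq> S' (p (i * n + j))} \<le> card {j. j < n \<and> p (i * n + j) \<in> Z}"
proof (rule card_mono)
  show "{j. j < n \<and> blocks n k (S \<circ> p) i j \<noteq> S' (p (i * n + j))} \<subseteq> {j. j < n \<and> p (i * n + j) \<in> Z}"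
  proof safe
    fix j assume j: "j < n" and mismatch: "blocks n k (S \<circ> p) i j \<noteq> S' (p (i * n + j))"
    have "p (i * n + j) < n * k"
      using permutes_in_image[OF p] block_index_less[OF i j] by simp
    then show "p (i * n + j) \<in> Z"
      using S' mismatch i j by (auto simp: blocks_def)
  qed
qed simp

theorem proposition5p6:
  fixes P :: "'w measure" and D :: "'a measure" and c :: "'a \<Rightarrow> bool"
    and \<eta> :: real and n k :: nat
    and Sbig S' :: "'w \<Rightarrow> nat \<Rightarrow> 'a \<times> bool"
    and Z :: "'w \<Rightarrow> nat set" and \<sigma> :: "'w \<Rightarrow> nat \<Rightarrow> nat"
  assumes P: "prob_space P"
    and D: "prob_space D"
    and c: "c \<in> D \<rightarrow>\<^sub>M count_space UNIV"
    and eta: "0 \<le> \<eta>" "\<eta> \<le> 1"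
    and Sbig_meas: "Sbig \<in> P \<rightarrow>\<^sub>M sample_space D (n * k)"
    and Sbig_dist: "distr P (sample_space D (n * k)) Sbig
                    = PiM {..<n * k} (\<lambda>_. labeled_dist D c)"
    and Z_meas: "Z \<in> P \<rightarrow>\<^sub>M count_space (Pow {..<n * k})"
    and Z_card: "distr P (count_space UNIV) (\<lambda>\<omega>. card (Z \<omega>))
                 = measure_pmf (binomial_pmf (n * k) \<eta>)"
    and S'_meas: "S' \<in> P \<rightarrow>\<^sub>M sample_space D (n * k)"
    and S'_corrupt: "\<forall>\<omega>\<in>space P. \<forall>i<n * k. i \<notin> Z \<omega> \<longrightarrow> S' \<omega> i = Sbig \<omega> i"
    and \<sigma>_meas: "\<sigma> \<in> P \<rightarrow>\<^sub>M count_space UNIV"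
    and \<sigma>_unif: "distr P (count_space UNIV) \<sigma>
                  = measure_pmf (pmf_of_set {p. p permutes {..<n * k}})"
    and \<sigma>_indep: "distr P
        ((sample_space D (n * k) \<Otimes>\<^sub>M (count_space (Pow {..<n * k}) \<Otimes>\<^sub>M sample_space D (n * k)))
           \<Otimes>\<^sub>M count_space UNIV)
        (\<lambda>\<omega>. ((Sbig \<omega>, Z \<omega>, S' \<omega>), \<sigma> \<omega>))
      = distr P (sample_space D (n * k) \<Otimes>\<^sub>M (count_space (Pow {..<n * k}) \<Otimes>\<^sub>M sample_space D (n * k)))
          (\<lambda>\<omega>. (Sbig \<omega>, Z \<omega>, S' \<omega>))
        \<Otimes>\<^sub>M distr P (count_space UNIV) \<sigma>"
  shows "\<exists>(Sg :: 'w \<Rightarrow> nat \<Rightarrow> nat \<Rightarrow> 'a \<times> bool) (zs :: 'w \<Rightarrow> nat \<Rightarrow> nat).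
           Sg \<in> P \<rightarrow>\<^sub>M PiM {..<k} (\<lambda>_. sample_space D n)
         \<and> distr P (PiM {..<k} (\<lambda>_. sample_space D n)) Sg
             = PiM {..<k} (\<lambda>_. PiM {..<n} (\<lambda>_. labeled_dist D c))
         \<and> zs \<in> P \<rightarrow>\<^sub>M PiM {..<k} (\<lambda>_. count_space UNIV)
         \<and> distr P (PiM {..<k} (\<lambda>_. count_space UNIV)) zs
             = PiM {..<k} (\<lambda>_. measure_pmf (binomial_pmf n \<eta>))
         \<and> (AE \<omega> in P. \<forall>i<k.
               card {j. j < n \<and> Sg \<omega> i j \<noteq> S' \<omega> (\<sigma> \<omega> (i * n + j))} \<le> zs \<omega> i)"
proof -
  let ?SS = "sample_space D (n * k)"
  let ?Ps = "{p. p permutes {..<n * k}}"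
  have triple: "(\<lambda>\<omega>. (Sbig \<omega>, Z \<omega>, S' \<omega>)) \<in> P \<rightarrow>\<^sub>M ?SS \<Otimes>\<^sub>M (count_space (Pow {..<n * k}) \<Otimes>\<^sub>M ?SS)"
    using Sbig_meas Z_meas S'_meas by measurable
  note indep_compose = distr_pair_compose_fst[OF P triple \<sigma>_meas _ \<sigma>_indep, unfolded \<sigma>_unif]
  have Sbig_indep: "distr P (?SS \<Otimes>\<^sub>M count_space UNIV) (\<lambda>\<omega>. (Sbig \<omega>, \<sigma> \<omega>))
      = distr P ?SS Sbig \<Otimes>\<^sub>M measure_pmf (pmf_of_set ?Ps)"
    using indep_compose[of fst] by simp
  have Z_indep: "distr P (count_space (Pow {..<n * k}) \<Otimes>\<^sub>M count_space UNIV) (\<lambda>\<omega>. (Z \<omega>, \<sigma> \<omega>))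
      = distr P (count_space (Pow {..<n * k})) Z \<Otimes>\<^sub>M measure_pmf (pmf_of_set ?Ps)"
    using indep_compose[of "\<lambda>t. fst (snd t)"] by simp
  define Sg where "Sg \<omega> = blocks n k (Sbig \<omega> \<circ> (if \<sigma> \<omega> permutes {..<n * k} then \<sigma> \<omega> else id))" for \<omega>
  define zs where "zs \<omega> = (\<lambda>i\<in>{..<k}. card {j. j < n \<and> \<sigma> \<omega> (i * n + j) \<in> Z \<omega>})" for \<omega>
  have "AE \<omega> in P. \<sigma> \<omega> \<in> ?Ps"
    using AE_indep_uniform[OF P Z_meas \<sigma>_meas Z_indep] finite_permutations[of "{..<n * k}"]
      permutes_id[of "{..<n * k}"] by blast
  then have "AE \<omega> in P. \<forall>i<k. card {j. j < n \<and> Sg \<omega> i j \<noteq> S' \<omega> (\<sigma> \<omega> (i * n + j))} \<le> zs \<omega> i"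
    using AE_space by eventually_elim (use S'_corrupt in \<open>simp add: Sg_def zs_def card_blocks_mismatch_le\<close>)
  then show ?thesis
    using distr_blocks_indep_uniform_permutation[OF P prob_space_labeled_dist[OF D c] sets_labeled_dist
        Sbig_meas[unfolded sample_space_def] Sbig_dist[unfolded sample_space_def] \<sigma>_meas
        Sbig_indep[unfolded sample_space_def]]
      distr_block_counts_indep_uniform_permutation[OF P eta Z_meas Z_card \<sigma>_meas Z_indep]
    unfolding sample_space_def Sg_def[symmetric] zs_def[symmetric] by blast
qed

end
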